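(* Let $\mathfrak{D}\subset(\mathbb{C}\setminus\{0\})^{12}$, with coordinates $(w,w',w'',x,x',x'',y,y',y'',z,z',z'')$, be the variety defined by the equations $1=t(1-t'')$, $1=t'(1-t)$, $1=t''(1-t')$ for each $t\in\{w,x,y,z\}$, together with $1=wxyz$, $1=w'x'y'z'(w'')^2(x'')^2$ and $1=w'x'y'z'(y'')^2(z'')^2$. Let $\overline{\mathfrak{C}}\subset(\mathbb{C}\setminus\{0\})^2\times\mathbb{C}$, with coordinates $(\bar s,\bar u,d)$, be the hypersurface defined by $$0=\bar s\bar u(\bar s-1)(\bar u-1)+d\,(1-\bar s-\bar u+4\bar s\bar u-\bar s^2\bar u-\bar s\bar u^2+\bar s^2\bar u^2)+d^2(2-\bar s-\bar u+2\bar s\bar u)+d^3 .$$ Then there is a birational isomorphism $\mathfrak{D}\to\overline{\mathfrak{C}}$.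
   Context: $\mathfrak{D}$ is the deformation variety of the standard four-tetrahedron ideal triangulation of the complement $W$ of the right-handed Whitehead link. The fundamental group $\pi_1(W)$ is generated by two meridians $\mathcal{M}_0,\mathcal{M}_1$ subject to the single relation $\mathcal{M}_1\mathcal{M}_0\mathcal{M}_1\mathcal{M}_0^{-1}\mathcal{M}_1^{-1}\mathcal{M}_0^{-1}\mathcal{M}_1\mathcal{M}_0=\mathcal{M}_0\mathcal{M}_1\mathcal{M}_0^{-1}\mathcal{M}_1^{-1}\mathcal{M}_0^{-1}\mathcal{M}_1\mathcal{M}_0\mathcal{M}_1$, and $\overline{\mathfrak{C}}$ is exactly the set of parameters for which $\mathcal{M}_0\mapsto\begin{pmatrix}\bar s& d\\0&1\end{pmatrix}$, $\mathcal{M}_1\mapsto\begin{pmatrix}\bar u&0\\1&1\end{pmatrix}$ defines a representation of $\pi_1(W)$ into $GL_2(\mathbb{C})$ (equivalently, into the group of projective transformations of $\mathbb{C}P^1$). *)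

theory Defs
  imports Complex_Main
begin

(* Points of C^n are represented as complex lists of length n. *)

inductive poly_fun :: "nat \<Rightarrow> (complex list \<Rightarrow> complex) \<Rightarrow> bool" for n where
  pf_const: "poly_fun n (\<lambda>v. c)"
| pf_var: "i < n \<Longrightarrow> poly_fun n (\<lambda>v. v ! i)"
| pf_add: "poly_fun n p \<Longrightarrow> poly_fun n q \<Longrightarrow> poly_fun n (\<lambda>v. p v + q v)"
| pf_mult: "poly_fun n p \<Longrightarrow> poly_fun n q \<Longrightarrow> poly_fun n (\<lambda>v. p v * q v)"

definition zariski_open_in :: "nat \<Rightarrow> complex list set \<Rightarrow> complex list set \<Rightarrow> bool" where
  "zariski_open_in n X U \<longleftrightarrow>
     (\<exists>hs. (\<forall>h\<in>set hs. poly_fun n h) \<and> U = {v\<in>X. \<exists>h\<in>set hs. h v \<noteq> 0})"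

definition zariski_dense_in :: "nat \<Rightarrow> complex list set \<Rightarrow> complex list set \<Rightarrow> bool" where
  "zariski_dense_in n X U \<longleftrightarrow>
     U \<subseteq> X \<and> (\<forall>h. poly_fun n h \<longrightarrow> (\<forall>v\<in>U. h v = 0) \<longrightarrow> (\<forall>v\<in>X. h v = 0))"

definition rat_map :: "nat \<Rightarrow> nat \<Rightarrow> ((complex list \<Rightarrow> complex) \<times> (complex list \<Rightarrow> complex)) list \<Rightarrow> bool" where
  "rat_map n m F \<longleftrightarrow> length F = m \<and> (\<forall>(p,q)\<in>set F. poly_fun n p \<and> poly_fun n q)"

definition rat_eval :: "((complex list \<Rightarrow> complex) \<times> (complex list \<Rightarrow> complex)) list \<Rightarrow> complex list \<Rightarrow> complex list" where
  "rat_eval F v = map (\<lambda>(p,q). p v / q v) F"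

definition defined_on :: "((complex list \<Rightarrow> complex) \<times> (complex list \<Rightarrow> complex)) list \<Rightarrow> complex list set \<Rightarrow> bool" where
  "defined_on F U \<longleftrightarrow> (\<forall>v\<in>U. \<forall>(p,q)\<in>set F. q v \<noteq> 0)"

definition birational_iso :: "nat \<Rightarrow> complex list set \<Rightarrow> nat \<Rightarrow> complex list set \<Rightarrow> bool" where
  "birational_iso n X m Y \<longleftrightarrow>
     (\<exists>F G U V. rat_map n m F \<and> rat_map m n G \<and>
        zariski_open_in n X U \<and> zariski_dense_in n X U \<and>
        zariski_open_in m Y V \<and> zariski_dense_in m Y V \<and>
        defined_on F U \<and> defined_on G V \<and>
        (\<forall>v\<in>U. rat_eval F v \<in> V \<and> rat_eval G (rat_eval F v) = v) \<and>
        (\<forall>v\<in>V. rat_eval G v \<in> U \<and> rat_eval F (rat_eval G v) = v))"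

definition shape_eqs :: "complex \<Rightarrow> complex \<Rightarrow> complex \<Rightarrow> bool" where
  "shape_eqs t t' t'' \<longleftrightarrow> 1 = t * (1 - t'') \<and> 1 = t' * (1 - t) \<and> 1 = t'' * (1 - t')"

definition deformation_variety :: "complex list set" where
  "deformation_variety = {v. length v = 12 \<and> (\<forall>i<12. v ! i \<noteq> 0) \<and>
     (let w = v!0; w' = v!1; w'' = v!2; x = v!3; x' = v!4; x'' = v!5;
          y = v!6; y' = v!7; y'' = v!8; z = v!9; z' = v!10; z'' = v!11 in
       shape_eqs w w' w'' \<and> shape_eqs x x' x'' \<and> shape_eqs y y' y'' \<and> shape_eqs z z' z'' \<and>
       1 = w * x * y * z \<and>
       1 = w' * x' * y' * z' * w''^2 * x''^2 \<and>
       1 = w' * x' * y' * z' * y''^2 * z''^2)}"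

definition C_bar :: "complex list set" where
  "C_bar = {v. length v = 3 \<and> v!0 \<noteq> 0 \<and> v!1 \<noteq> 0 \<and>
     (let s = v!0; u = v!1; d = v!2 in
       0 = s * u * (s - 1) * (u - 1)
           + d * (1 - s - u + 4*s*u - s^2*u - s*u^2 + s^2*u^2)
           + d^2 * (2 - s - u + 2*s*u) + d^3)}"

end

theory Submission
  imports Defs "HOL-Analysis.Complex_Transcendental"
begin

(* The shape equations give t' = 1/(1 - t) and t'' = (t - 1)/t, and w x y z = 1 gives
   z = 1/(w x y); after this elimination the second gluing equation follows from the first, so
   the deformation variety is the surface gluing_poly w x y = 0 in the coordinates (w, x, y).
   On it the map
     (s, u, d) = (w x, (w - 1)(1 - z)/(w z - 1), w (1 - z)(1 - w x)/(w z - 1))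
   has the rational inverse w = d/A, x = s A/d, y = B/(s C), where A = d - u (1 - s),
   B = d + 1 - s and C = d + (1 - s)(1 - u), and the two maps are mutually inverse between the
   open sets {w x \<noteq> 1} and {(s - 1) d (d - s + 1) \<noteq> 0}.
   Both open sets are dense: every boundary point is the limit of a continuous curve inside the
   open set, so a polynomial vanishing on the open set vanishes there too. The curve moves one
   coordinate and follows a simple root of the defining equation, which is quadratic in another
   coordinate. *)

section \<open>Polynomial functions and Zariski density\<close>

lemma poly_fun_neg:
  assumes "poly_fun n p"
  shows "poly_fun n (\<lambda>v. - p v)"
  using pf_mult[OF pf_const assms, of "-1"] by simp

lemma poly_fun_diff:
  assumes "poly_fun n p" "poly_fun n q"
  shows "poly_fun n (\<lambda>v. p v - q v)"
  using pf_add[OF assms(1) poly_fun_neg[OF assms(2)]] by simp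

lemmas poly_fun_intros = pf_const pf_var pf_add pf_mult poly_fun_diff poly_fun_neg

lemma isCont_poly_fun:
  fixes \<gamma> :: "'a::t2_space \<Rightarrow> complex list"
  assumes "poly_fun n h" "\<forall>i<n. isCont (\<lambda>e. \<gamma> e ! i) a"
  shows "isCont (\<lambda>e. h (\<gamma> e)) a"
  using assms by (induction rule: poly_fun.induct) (auto intro!: continuous_intros)

lemma zariski_dense_in_if_curves:
  assumes "U \<subseteq> X"
    and curve: "\<And>p. p \<in> X - U \<Longrightarrow> \<exists>\<gamma>. \<gamma> 0 = p \<and> (\<forall>i<n. isCont (\<lambda>e::complex. \<gamma> e ! i) 0)
                                     \<and> (\<forall>\<^sub>F e in at 0. \<gamma> e \<in> U)"
  shows "zariski_dense_in n X U"
  unfolding zariski_dense_in_def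
proof (intro conjI allI impI ballI)
  fix h p assume h: "poly_fun n h" and h_U: "\<forall>v\<in>U. h v = 0" and p: "p \<in> X"
  show "h p = 0"
  proof (cases "p \<in> U")
    case False
    then obtain \<gamma> where \<gamma>: "\<gamma> 0 = p" "\<forall>i<n. isCont (\<lambda>e::complex. \<gamma> e ! i) 0"
        "\<forall>\<^sub>F e in at 0. \<gamma> e \<in> U"
      using curve p by blast
    have "((\<lambda>e. h (\<gamma> e)) \<longlongrightarrow> h p) (at 0)"
      using isContD[OF isCont_poly_fun[OF h \<gamma>(2)]] \<gamma>(1) by simp
    moreover have "((\<lambda>e. h (\<gamma> e)) \<longlongrightarrow> 0) (at 0)"
      using \<gamma>(3) by (rule tendsto_eventually[OF eventually_mono]) (use h_U in blast)
    ultimately show ?thesis by (rule tendsto_unique[OF at_neq_bot])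
  qed (use h_U in blast)
qed (fact assms)

section \<open>Following a simple root of a quadratic\<close>

lemma quadratic_eq_alt_root:
  fixes a r q R :: complex
  assumes "R^2 = r^2 - 4*a*q" "r + R \<noteq> 0"
  shows "a * (-2*q/(r+R))^2 + r * (-2*q/(r+R)) + q = 0"
proof -
  define Y where "Y = -2*q/(r+R)"
  have Y: "Y * (r+R) = -2*q" unfolding Y_def using assms(2) by simp
  have "(r+R)^2 * (a * Y^2 + r * Y + q) = a * (Y*(r+R))^2 + r*(r+R)*(Y*(r+R)) + q*(r+R)^2"
    by (simp add: algebra_simps power2_eq_square)
  also have "\<dots> = q * (4*a*q - r^2 + R^2)" unfolding Y by (simp add: algebra_simps power2_eq_square)
  also have "\<dots> = 0" using assms(1) by simp
  finally show ?thesis using assms(2) unfolding Y_def by simp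
qed

(* Re-centred at x0 the quadratic reads a Y^2 + r Y + q with q = 0 and r \<noteq> 0 at t0.
   The root Y = -2q/(r + R), with R the square root of r^2 - 4aq normalised to equal r at t0,
   only uses csqrt near 1, away from its branch cut. *)
lemma continuous_quadratic_root:
  fixes a b c :: "'a::t2_space \<Rightarrow> complex"
  assumes "isCont a t0" "isCont b t0" "isCont c t0"
    and root: "a t0 * x0^2 + b t0 * x0 + c t0 = 0" and simple: "2 * a t0 * x0 + b t0 \<noteq> 0"
  shows "\<exists>X. isCont X t0 \<and> X t0 = x0 \<and> (\<forall>\<^sub>F e in at t0. a e * (X e)^2 + b e * X e + c e = 0)"
proof -
  define r0 where "r0 = 2 * a t0 * x0 + b t0"
  define r where "r e = 2 * a e * x0 + b e" for e
  define q where "q e = a e * x0^2 + b e * x0 + c e" for e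
  define R where "R e = r0 * csqrt ((r e ^ 2 - 4 * a e * q e) / r0 ^ 2)" for e
  define X where "X e = x0 + (- 2 * q e / (r e + R e))" for e
  have r0: "r0 \<noteq> 0" using simple r0_def by simp
  have q0: "q t0 = 0" using root q_def by simp
  have r00: "r t0 = r0" by (simp add: r_def r0_def)
  have discr0: "(r t0 ^ 2 - 4 * a t0 * q t0) / r0 ^ 2 = 1" using r0 q0 r00 by simp
  have cont_r: "isCont r t0" unfolding r_def[abs_def] using assms(1,2) by (intro continuous_intros)
  have cont_q: "isCont q t0" unfolding q_def[abs_def] using assms(1-3) by (intro continuous_intros)
  have cont_R: "isCont R t0" unfolding R_def[abs_def]
    by (intro continuous_intros isCont_csqrt' cont_r cont_q assms(1))
      (use discr0 in \<open>auto simp: complex_nonpos_Reals_iff\<close>)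
  have "R t0 = r0" unfolding R_def using discr0 by simp
  then have den0: "r t0 + R t0 \<noteq> 0" using r00 r0 by simp
  have den: "\<forall>\<^sub>F e in at t0. r e + R e \<noteq> 0"
    using tendsto_imp_eventually_ne[OF isContD[OF continuous_add[OF cont_r cont_R]] den0] by simp
  have "isCont X t0" unfolding X_def[abs_def] by (intro continuous_intros cont_q cont_r cont_R den0)
  moreover have "X t0 = x0" by (simp add: X_def q0)
  moreover from den have "\<forall>\<^sub>F e in at t0. a e * (X e)^2 + b e * X e + c e = 0"
  proof eventually_elim
    case (elim e)
    have R_sq: "R e ^ 2 = r e ^ 2 - 4 * a e * q e"
      unfolding R_def using r0 by (simp add: power_mult_distrib)
    have recentre: "a e*(x0+Y)^2 + b e*(x0+Y) + c e = a e*Y^2 + r e*Y + q e" for Y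
      unfolding r_def q_def by (simp add: algebra_simps power2_eq_square)
    have "a e * (X e)^2 + b e * X e + c e
       = a e * (-2*q e/(r e+R e))^2 + r e * (-2*q e/(r e+R e)) + q e"
      unfolding X_def by (rule recentre)
    also have "\<dots> = 0" by (rule quadratic_eq_alt_root[OF R_sq elim])
    finally show ?case .
  qed
  ultimately show ?thesis by blast
qed

section \<open>The deformation variety in shape parameters\<close>

lemma all_less_12:
  "(\<forall>i<(12::nat). P i) \<longleftrightarrow> P 0 \<and> P 1 \<and> P 2 \<and> P 3 \<and> P 4 \<and> P 5 \<and> P 6 \<and> P 7 \<and> P 8 \<and> P 9 \<and> P 10 \<and> P 11"
  by (simp add: All_less_Suc numeral_eq_Suc) (auto simp: numeral_eq_Suc)

lemma all_less_3: "(\<forall>i<(3::nat). P i) \<longleftrightarrow> P 0 \<and> P 1 \<and> P 2"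
  by (simp add: All_less_Suc numeral_eq_Suc) (auto simp: numeral_eq_Suc)

lemma shape_eqs_iff: "shape_eqs t t' t'' \<longleftrightarrow> t \<notin> {0, 1} \<and> t' = 1/(1-t) \<and> t'' = (t-1)/t"
proof
  assume "shape_eqs t t' t''"
  then have eqs: "1 = t * (1 - t'')" "1 = t' * (1 - t)" unfolding shape_eqs_def by auto
  then have "t \<noteq> 0" "t \<noteq> 1" by auto
  with eqs show "t \<notin> {0, 1} \<and> t' = 1/(1-t) \<and> t'' = (t-1)/t" by (auto simp: field_simps)
next
  assume "t \<notin> {0, 1} \<and> t' = 1/(1-t) \<and> t'' = (t-1)/t"
  then show "shape_eqs t t' t''" unfolding shape_eqs_def by (auto simp: field_simps)
qed

definition shape_triple :: "complex \<Rightarrow> complex list" where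
  "shape_triple t = [t, 1/(1-t), (t-1)/t]"

lemma shape_triple_frac:
  fixes p q r :: complex
  assumes "p \<noteq> 0" "q \<noteq> 0" "q - p = r" "r \<noteq> 0"
  shows "shape_triple (p/q) = [p/q, q/r, -r/p]"
proof -
  have "1 - p/q = (q-p)/q" "p/q - 1 = -(q-p)/q" using assms(2) by (simp_all add: field_simps)
  then have "1 - p/q = r/q" "p/q - 1 = -r/q" unfolding assms(3) .
  then have "shape_triple (p/q) = [p/q, 1/(r/q), (-r/q)/(p/q)]" unfolding shape_triple_def by simp
  then show ?thesis using assms(1,2) by simp
qed

definition shape_point :: "complex \<Rightarrow> complex \<Rightarrow> complex \<Rightarrow> complex list" where
  "shape_point w x y = shape_triple w @ shape_triple x @ shape_triple y @ shape_triple (1/(w*x*y))"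

(* Up to sign, y times the first gluing equation with denominators cleared, after eliminating
   the primed shapes and z = 1/(w x y) *)
definition gluing_poly :: "complex \<Rightarrow> complex \<Rightarrow> complex \<Rightarrow> complex" where
  "gluing_poly w x y = w^2*y*(y-1)*x^2 + (w-y)*x + y*(1-w)"

definition shape_params :: "complex \<Rightarrow> complex \<Rightarrow> complex \<Rightarrow> bool" where
  "shape_params w x y \<longleftrightarrow>
     w \<notin> {0, 1} \<and> x \<notin> {0, 1} \<and> y \<notin> {0, 1} \<and> w*x*y \<noteq> 1 \<and> gluing_poly w x y = 0"

lemma isCont_shape_point:
  fixes w x y :: "'a::t2_space \<Rightarrow> complex"
  assumes "isCont w a" "isCont x a" "isCont y a"
    and "w a \<notin> {0, 1}" "x a \<notin> {0, 1}" "y a \<notin> {0, 1}" "w a * x a * y a \<noteq> 1"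
  shows "\<forall>i<12. isCont (\<lambda>e. shape_point (w e) (x e) (y e) ! i) a"
proof -
  have "1 - w a \<noteq> 0" "1 - x a \<noteq> 0" "1 - y a \<noteq> 0" "1 - 1 / (w a * x a * y a) \<noteq> 0"
    using assms(4-7) by (auto simp: field_simps)
  then show ?thesis
    unfolding all_less_12 shape_point_def shape_triple_def
    using assms by (simp del: One_nat_def add: continuous_intros)
qed

lemma Cons_in_deformation_variety_iff:
  "[w,w',w'',x,x',x'',y,y',y'',z,z',z''] \<in> deformation_variety \<longleftrightarrow>
     w' \<noteq> 0 \<and> w'' \<noteq> 0 \<and> x' \<noteq> 0 \<and> x'' \<noteq> 0 \<and> y' \<noteq> 0 \<and> y'' \<noteq> 0 \<and> z' \<noteq> 0 \<and> z'' \<noteq> 0 \<and>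
     shape_eqs w w' w'' \<and> shape_eqs x x' x'' \<and> shape_eqs y y' y'' \<and> shape_eqs z z' z'' \<and>
     1 = w * x * y * z \<and> 1 = w' * x' * y' * z' * w''^2 * x''^2 \<and> 1 = w' * x' * y' * z' * y''^2 * z''^2"
  unfolding deformation_variety_def all_less_12 by (auto simp: Let_def shape_eqs_iff)

lemma gluing_eq_shape_form:
  fixes w x y z :: complex
  assumes "w \<notin> {0, 1}" "x \<notin> {0, 1}" "y \<notin> {0, 1}" "z \<notin> {0, 1}"
  shows "1 = 1/(1-w) * (1/(1-x)) * (1/(1-y)) * (1/(1-z)) * ((w-1)/w)^2 * ((x-1)/x)^2
     \<longleftrightarrow> w^2*x^2*(1-y)*(1-z) = (1-w)*(1-x)"
proof -
  have factor: "1/(1-t) * ((t-1)/t)^2 = (1-t)/t^2" if "t \<notin> {0, 1}" for t :: complex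
  proof -
    have "(t-1)^2 = (1-t)^2" by (simp add: power2_eq_square algebra_simps)
    then show ?thesis using that by (simp add: power_divide power2_eq_square)
  qed
  have "1/(1-w) * (1/(1-x)) * (1/(1-y)) * (1/(1-z)) * ((w-1)/w)^2 * ((x-1)/x)^2
      = (1/(1-w) * ((w-1)/w)^2) * (1/(1-x) * ((x-1)/x)^2) * (1/(1-y)) * (1/(1-z))"
    by (simp add: algebra_simps)
  also have "\<dots> = ((1-w)*(1-x)) / (w^2*x^2*(1-y)*(1-z))"
    using factor assms by simp
  finally have product: "1/(1-w) * (1/(1-x)) * (1/(1-y)) * (1/(1-z)) * ((w-1)/w)^2 * ((x-1)/x)^2
      = ((1-w)*(1-x)) / (w^2*x^2*(1-y)*(1-z))" .
  have "w^2*x^2*(1-y)*(1-z) \<noteq> 0" using assms by auto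
  then show ?thesis unfolding product by (auto simp: eq_divide_eq)
qed

lemma gluing_eq_poly_form:
  fixes w x y z :: complex
  assumes "y \<noteq> 0" and z: "z * (w*x*y) = 1"
  shows "w^2*x^2*(1-y)*(1-z) = (1-w)*(1-x) \<longleftrightarrow> gluing_poly w x y = 0"
proof -
  have "y * (w^2*x^2*(1-y)*(1-z) - (1-w)*(1-x))
      = y*w^2*x^2*(1-y) - w*x*(1-y)*(z*(w*x*y)) - y*(1-w)*(1-x)"
    by (simp add: algebra_simps power2_eq_square)
  also have "\<dots> = - gluing_poly w x y"
    unfolding z gluing_poly_def by (simp add: algebra_simps power2_eq_square)
  finally show ?thesis using assms(1) by (metis add.inverse_neutral eq_iff_diff_eq_0 mult_eq_0_iff neg_0_equal_iff_equal)
qed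

lemma shape_point_in_deformation_variety:
  assumes "shape_params w x y"
  shows "shape_point w x y \<in> deformation_variety"
proof -
  define z where "z = 1/(w*x*y)"
  have wxy: "w \<notin> {0, 1}" "x \<notin> {0, 1}" "y \<notin> {0, 1}" "w*x*y \<noteq> 1" "gluing_poly w x y = 0"
    using assms unfolding shape_params_def by auto
  then have z: "z \<notin> {0, 1}" "z * (w*x*y) = 1" by (auto simp: z_def field_simps)
  have first: "w^2*x^2*(1-y)*(1-z) = (1-w)*(1-x)"
    using gluing_eq_poly_form[OF _ z(2)] wxy by simp
  have "y^2*z^2*(1-w)*(1-x) = y^2*z^2*(w^2*x^2*(1-y)*(1-z))" using first by simp
  also have "\<dots> = (z*(w*x*y))^2 * ((1-y)*(1-z))" by (simp add: algebra_simps power2_eq_square)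
  finally have second: "y^2*z^2*(1-w)*(1-x) = (1-y)*(1-z)" using z by simp
  have "shape_eqs t (1/(1-t)) ((t-1)/t)" if "t \<notin> {0, 1}" for t
    using that shape_eqs_iff by simp
  moreover have "1 = 1/(1-w) * (1/(1-x)) * (1/(1-y)) * (1/(1-z)) * ((w-1)/w)^2 * ((x-1)/x)^2"
    using gluing_eq_shape_form[OF wxy(1-3) z(1)] first by simp
  moreover have "1 = 1/(1-y) * (1/(1-z)) * (1/(1-w)) * (1/(1-x)) * ((y-1)/y)^2 * ((z-1)/z)^2"
    using gluing_eq_shape_form[OF wxy(3) z(1) wxy(1,2)] second by simp
  ultimately show ?thesis
    unfolding shape_point_def shape_triple_def z_def[symmetric]
    using wxy z by (simp add: Cons_in_deformation_variety_iff algebra_simps)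
qed

lemma deformation_variety_shape_point:
  assumes "v \<in> deformation_variety"
  shows "shape_params (v!0) (v!3) (v!6) \<and> v = shape_point (v!0) (v!3) (v!6)"
proof -
  have "length v = 12" using assms by (simp add: deformation_variety_def)
  then obtain w w' w'' x x' x'' y y' y'' z z' z''
    where v: "v = [w,w',w'',x,x',x'',y,y',y'',z,z',z'']"
    by (simp add: list_eq_iff_nth_eq all_less_12)
  have eqs: "shape_eqs w w' w''" "shape_eqs x x' x''" "shape_eqs y y' y''" "shape_eqs z z' z''"
      "1 = w * x * y * z" "1 = w' * x' * y' * z' * w''^2 * x''^2"
    using assms unfolding v Cons_in_deformation_variety_iff by auto
  then have shapes: "w \<notin> {0, 1}" "x \<notin> {0, 1}" "y \<notin> {0, 1}" "z \<notin> {0, 1}"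
      "w' = 1/(1-w)" "x' = 1/(1-x)" "y' = 1/(1-y)" "z' = 1/(1-z)"
      "w'' = (w-1)/w" "x'' = (x-1)/x" "y'' = (y-1)/y" "z'' = (z-1)/z"
    unfolding shape_eqs_iff by auto
  have z: "z * (w*x*y) = 1" using eqs(5) by (simp add: algebra_simps)
  have "z = 1/(w*x*y)" using z shapes(1-3) by (simp add: field_simps)
  moreover have "w*x*y \<noteq> 1" using z shapes(4) by auto
  moreover have "gluing_poly w x y = 0"
    using eqs(6) gluing_eq_shape_form[OF shapes(1-4)] gluing_eq_poly_form[OF _ z] shapes by simp
  ultimately show ?thesis
    unfolding v shape_point_def shape_triple_def shape_params_def using shapes by simp
qed

section \<open>The hypersurface and the two rational maps\<close>

definition cbar_poly :: "complex \<Rightarrow> complex \<Rightarrow> complex \<Rightarrow> complex" where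
  "cbar_poly s u d = s * u * (s - 1) * (u - 1)
     + d * (1 - s - u + 4 * s * u - s^2 * u - s * u^2 + s^2 * u^2)
     + d^2 * (2 - s - u + 2 * s * u) + d^3"

lemma Cons_in_C_bar_iff: "[s,u,d] \<in> C_bar \<longleftrightarrow> s \<noteq> 0 \<and> u \<noteq> 0 \<and> cbar_poly s u d = 0"
  unfolding C_bar_def cbar_poly_def by (auto simp: Let_def)

definition D_open :: "complex list set" where
  "D_open = {v \<in> deformation_variety. v!0 * v!3 \<noteq> 1}"

definition C_open :: "complex list set" where
  "C_open = {v \<in> C_bar. v!0 \<noteq> 1 \<and> v!2 \<noteq> 0 \<and> v!2 \<noteq> v!0 - 1}"

lemma zariski_open_D_open: "zariski_open_in 12 deformation_variety D_open"
  unfolding zariski_open_in_def D_open_def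
  by (rule exI[of _ "[\<lambda>v. v!0 * v!3 - 1]"]) (auto intro!: poly_fun_intros)

lemma zariski_open_C_open: "zariski_open_in 3 C_bar C_open"
  unfolding zariski_open_in_def C_open_def
  by (rule exI[of _ "[\<lambda>v. (v!0 - 1) * v!2 * (v!2 - (v!0 - 1))]"]) (auto intro!: poly_fun_intros)

lemma D_open_cases:
  assumes "v \<in> D_open"
  obtains w x y where "v = shape_point w x y" "shape_params w x y" "w*x \<noteq> 1"
  using assms deformation_variety_shape_point unfolding D_open_def by blast

lemma shape_point_in_D_open:
  assumes "shape_params w x y" "w*x \<noteq> 1"
  shows "shape_point w x y \<in> D_open"
  using assms shape_point_in_deformation_variety
  by (simp add: D_open_def shape_point_def shape_triple_def)

lemma Cons_in_C_open_iff:
  "[s,u,d] \<in> C_open \<longleftrightarrow> s \<noteq> 0 \<and> u \<noteq> 0 \<and> cbar_poly s u d = 0 \<and> s \<noteq> 1 \<and> d \<noteq> 0 \<and> d \<noteq> s - 1"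
  unfolding C_open_def by (auto simp: Cons_in_C_bar_iff)

lemma C_open_cases:
  assumes "v \<in> C_open"
  obtains s u d where "v = [s,u,d]" "[s,u,d] \<in> C_open"
proof -
  have "length v = 3" using assms by (simp add: C_open_def C_bar_def)
  then have "v = [v!0, v!1, v!2]" by (simp add: list_eq_iff_nth_eq all_less_3)
  with assms that show ?thesis by metis
qed

(* On each line where one of these factors vanishes, cbar_poly is a product of factors that
   are nonzero on C_open. *)
lemma C_open_factors_nonzero:
  assumes "[s,u,d] \<in> C_open"
  shows "d - u*(1-s) \<noteq> 0" "d + 1 - s \<noteq> 0" "d + (1-s)*(1-u) \<noteq> 0" "d + s*u \<noteq> 0"
    "s - s*u - 1 - d \<noteq> 0"
proof -
  have C: "s \<noteq> 0" "u \<noteq> 0" "cbar_poly s u d = 0" "s \<noteq> 1" "d \<noteq> 0" "d \<noteq> s - 1"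
    using assms by (auto simp: Cons_in_C_open_iff)
  show "d + 1 - s \<noteq> 0" using C(6) by (auto simp: algebra_simps)
  show "d - u*(1-s) \<noteq> 0"
  proof
    assume "d - u*(1-s) = 0"
    moreover have "cbar_poly s u (u*(1-s)) = u*(1+u)*(1-s)" unfolding cbar_poly_def by algebra
    ultimately have "u = -1" using C(2-4) by (simp add: add_eq_0_iff)
    with \<open>d - u*(1-s) = 0\<close> C(6) show False by simp
  qed
  show "d + (1-s)*(1-u) \<noteq> 0"
  proof
    assume "d + (1-s)*(1-u) = 0"
    then have d: "d = -(1-s)*(1-u)" by (simp add: algebra_simps add_eq_0_iff)
    moreover have "cbar_poly s u (-(1-s)*(1-u)) = -s*u*(1-u)*(1-s)" unfolding cbar_poly_def by algebra
    ultimately have "u = 1" using C(1-4) by simp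
    with d C(5) show False by simp
  qed
  show "d + s*u \<noteq> 0"
  proof
    assume "d + s*u = 0"
    then have "d = -s*u" by (simp add: algebra_simps add_eq_0_iff)
    moreover have "cbar_poly s u (-s*u) = -(s^2*u^2)" unfolding cbar_poly_def by algebra
    ultimately show False using C(1-3) by simp
  qed
  show "s - s*u - 1 - d \<noteq> 0"
  proof
    assume "s - s*u - 1 - d = 0"
    then have "d = s - s*u - 1" by (simp add: algebra_simps)
    moreover have "cbar_poly s u (s - s*u - 1) = -(s*u^2)" unfolding cbar_poly_def by algebra
    ultimately show False using C(1-3) by simp
  qed
qed

definition forward_map :: "((complex list \<Rightarrow> complex) \<times> (complex list \<Rightarrow> complex)) list" where
  "forward_map = [(\<lambda>v. v!0 * v!3, \<lambda>v. 1),
     (\<lambda>v. (v!0 - 1) * (1 - v!9), \<lambda>v. v!0 * v!9 - 1),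
     (\<lambda>v. v!0 * (1 - v!9) * (1 - v!0 * v!3), \<lambda>v. v!0 * v!9 - 1)]"

(* The shape triples of w = d/A, x = s A/d, y = B/(s C) and z = C/B, where A = d - u(1 - s),
   B = d + 1 - s and C = d + (1 - s)(1 - u), each entry written as a quotient of polynomials
   (cf. shape_triple_frac). *)
definition inverse_map :: "((complex list \<Rightarrow> complex) \<times> (complex list \<Rightarrow> complex)) list" where
  "inverse_map =
    (let A = \<lambda>v. v!2 - v!1*(1-v!0); B = \<lambda>v. v!2 + 1 - v!0; C = \<lambda>v. v!2 + (1-v!0)*(1-v!1) in
     [(\<lambda>v. v!2, A),
      (A, \<lambda>v. -(v!1*(1-v!0))),
      (\<lambda>v. v!1*(1-v!0), \<lambda>v. v!2),
      (\<lambda>v. v!0 * A v, \<lambda>v. v!2),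
      (\<lambda>v. v!2, \<lambda>v. (1-v!0)*(v!2 + v!0 * v!1)),
      (\<lambda>v. -((1-v!0)*(v!2 + v!0 * v!1)), \<lambda>v. v!0 * A v),
      (B, \<lambda>v. v!0 * C v),
      (\<lambda>v. v!0 * C v, \<lambda>v. (1-v!0)*(v!0 - v!0 * v!1 - 1 - v!2)),
      (\<lambda>v. -((1-v!0)*(v!0 - v!0 * v!1 - 1 - v!2)), B),
      (C, B),
      (B, \<lambda>v. (1-v!0) * v!1),
      (\<lambda>v. -((1-v!0) * v!1), C)])"

lemma rat_map_forward_map: "rat_map 12 3 forward_map"
  unfolding rat_map_def forward_map_def by (auto intro!: poly_fun_intros)

lemma rat_map_inverse_map: "rat_map 3 12 inverse_map"
  unfolding rat_map_def inverse_map_def Let_def by (auto intro!: poly_fun_intros)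

lemma defined_on_forward_map:
  assumes "\<forall>v\<in>U. v!0 * v!9 \<noteq> 1"
  shows "defined_on forward_map U"
  using assms by (auto simp: defined_on_def forward_map_def)

lemma defined_on_inverse_map: "defined_on inverse_map C_open"
  unfolding defined_on_def
proof (intro ballI)
  fix v pq assume "v \<in> C_open" "pq \<in> set inverse_map"
  moreover obtain s u d where "v = [s,u,d]" "[s,u,d] \<in> C_open"
    using C_open_cases[OF \<open>v \<in> C_open\<close>] by blast
  ultimately show "case pq of (p, q) \<Rightarrow> q v \<noteq> 0"
    using C_open_factors_nonzero[of s u d] by (auto simp: inverse_map_def Let_def Cons_in_C_open_iff)
qed

lemma rat_eval_forward_map:
  fixes w x y :: complex
  defines "z \<equiv> 1/(w*x*y)"
  shows "rat_eval forward_map (shape_point w x y)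
           = [w*x, (w-1)*(1-z)/(w*z-1), w*(1-z)*(1-w*x)/(w*z-1)]"
  by (simp add: rat_eval_def forward_map_def shape_point_def shape_triple_def z_def)

lemma rat_eval_inverse_map:
  assumes "[s,u,d] \<in> C_open"
  defines "A \<equiv> d - u*(1-s)" and "B \<equiv> d + 1 - s" and "C \<equiv> d + (1-s)*(1-u)"
  shows "rat_eval inverse_map [s,u,d] = shape_point (d/A) (s*A/d) (B/(s*C))"
proof -
  have nz: "s \<noteq> 0" "u \<noteq> 0" "s \<noteq> 1" "d \<noteq> 0" "A \<noteq> 0" "B \<noteq> 0" "C \<noteq> 0"
      "d + s*u \<noteq> 0" "s - s*u - 1 - d \<noteq> 0"
    using assms C_open_factors_nonzero[OF assms(1)] by (auto simp: Cons_in_C_open_iff)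
  have diffs: "A - d = -(u*(1-s))" "d - s*A = (1-s)*(d+s*u)" "s*C - B = (1-s)*(s-s*u-1-d)"
      "B - C = (1-s)*u"
    by (simp_all add: A_def B_def C_def algebra_simps)
  have "shape_triple (d/A) = [d/A, A/(-(u*(1-s))), u*(1-s)/d]"
    using shape_triple_frac[OF _ _ diffs(1)] nz by simp
  moreover have "shape_triple (s*A/d) = [s*A/d, d/((1-s)*(d+s*u)), -((1-s)*(d+s*u))/(s*A)]"
    by (rule shape_triple_frac[OF _ _ diffs(2)]) (use nz in simp_all)
  moreover have "shape_triple (B/(s*C))
      = [B/(s*C), s*C/((1-s)*(s-s*u-1-d)), -((1-s)*(s-s*u-1-d))/B]"
    by (rule shape_triple_frac[OF _ _ diffs(3)]) (use nz in simp_all)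
  moreover have "1/(d/A * (s*A/d) * (B/(s*C))) = C/B" using nz by (simp add: field_simps)
  moreover have "shape_triple (C/B) = [C/B, B/((1-s)*u), -((1-s)*u)/C]"
    by (rule shape_triple_frac[OF _ _ diffs(4)]) (use nz in simp_all)
  ultimately show ?thesis
    by (simp add: rat_eval_def inverse_map_def Let_def shape_point_def A_def B_def C_def)
qed

lemma gluing_poly_inverse:
  fixes s u d :: complex
  defines "A \<equiv> d - u*(1-s)" and "B \<equiv> d + 1 - s" and "C \<equiv> d + (1-s)*(1-u)"
  assumes nz: "s \<noteq> 0" "d \<noteq> 0" "A \<noteq> 0" "C \<noteq> 0"
  shows "gluing_poly (d/A) (s*A/d) (B/(s*C)) * (s*C^2*d*A) = -u*(1-s)^3 * cbar_poly s u d"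
proof -
  have "gluing_poly (d/A) (s*A/d) (B/(s*C)) * (s*C^2*d*A)
      = s*d*A*B*(B-s*C) + s^2*C^2*d*A - s*A^2*B*C + B*C*d*(A-d)"
    using nz unfolding gluing_poly_def by (simp add: field_simps power2_eq_square)
  also have "\<dots> = -u*(1-s)^3 * cbar_poly s u d"
    unfolding A_def B_def C_def cbar_poly_def by algebra
  finally show ?thesis .
qed

lemma shape_params_inverse:
  assumes "[s,u,d] \<in> C_open"
  defines "A \<equiv> d - u*(1-s)" and "B \<equiv> d + 1 - s" and "C \<equiv> d + (1-s)*(1-u)"
  shows "shape_params (d/A) (s*A/d) (B/(s*C))"
proof -
  have nz: "s \<noteq> 0" "u \<noteq> 0" "s \<noteq> 1" "d \<noteq> 0" "A \<noteq> 0" "B \<noteq> 0" "C \<noteq> 0"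
      "d + s*u \<noteq> 0" "s - s*u - 1 - d \<noteq> 0"
    using assms C_open_factors_nonzero[OF assms(1)] by (auto simp: Cons_in_C_open_iff)
  have "d \<noteq> A" "d \<noteq> s*A" "B \<noteq> s*C" "B \<noteq> C"
  proof -
    have "A - d = -(u*(1-s))" "d - s*A = (1-s)*(d+s*u)" "s*C - B = (1-s)*(s-s*u-1-d)"
        "B - C = (1-s)*u"
      by (simp_all add: A_def B_def C_def algebra_simps)
    then show "d \<noteq> A" "d \<noteq> s*A" "B \<noteq> s*C" "B \<noteq> C" using nz by auto
  qed
  moreover have "d/A * (s*A/d) * (B/(s*C)) = B/C" using nz by (simp add: field_simps)
  moreover have "gluing_poly (d/A) (s*A/d) (B/(s*C)) = 0"
    using gluing_poly_inverse[of s d u] assms(1) nz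
    unfolding A_def B_def C_def by (simp add: Cons_in_C_open_iff)
  ultimately show ?thesis
    unfolding shape_params_def using nz by (auto simp: field_simps)
qed

lemma forward_inverse:
  assumes "[s,u,d] \<in> C_open"
  shows "rat_eval forward_map (rat_eval inverse_map [s,u,d]) = [s,u,d]"
proof -
  define A B C where "A = d - u*(1-s)" and "B = d + 1 - s" and "C = d + (1-s)*(1-u)"
  define W where "W = d/A"
  have nz: "s \<noteq> 0" "u \<noteq> 0" "s \<noteq> 1" "d \<noteq> 0" "A \<noteq> 0" "B \<noteq> 0" "C \<noteq> 0"
    using assms C_open_factors_nonzero[OF assms(1)]
    by (auto simp: Cons_in_C_open_iff A_def B_def C_def)
  have WX: "W * (s*A/d) = s" using nz by (simp add: W_def)
  have Z: "1/(s * (B/(s*C))) = C/B" using nz by (simp add: field_simps)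
  have K: "W*(C/B) - 1 = u*(1-s)^2/(A*B)"
  proof -
    have "d*C - A*B = u*(1-s)^2" unfolding A_def B_def C_def by algebra
    then show ?thesis unfolding W_def using nz by (simp add: field_simps)
  qed
  have K_nz: "u*(1-s)^2/(A*B) \<noteq> 0" using nz by simp
  have W1: "W - 1 = u*(1-s)/A" unfolding W_def using nz by (simp add: field_simps A_def)
  have Z1: "1 - C/B = (1-s)*u/B"
  proof -
    have "B - C = (1-s)*u" unfolding B_def C_def by (simp add: algebra_simps)
    then show ?thesis using nz by (simp add: field_simps)
  qed
  have "(W-1)*(1-C/B) = u * (u*(1-s)^2/(A*B))"
    unfolding W1 Z1 using nz by (simp add: field_simps power2_eq_square)
  then have u: "(W-1)*(1-C/B)/(W*(C/B)-1) = u" unfolding K using K_nz by simp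
  have "W*(1-C/B)*(1-s) = d * (u*(1-s)^2/(A*B))"
    unfolding Z1 W_def using nz by (simp add: field_simps power2_eq_square)
  then have d: "W*(1-C/B)*(1-s)/(W*(C/B)-1) = d" unfolding K using K_nz by simp
  have "rat_eval inverse_map [s,u,d] = shape_point W (s*A/d) (B/(s*C))"
    using rat_eval_inverse_map[OF assms, folded A_def B_def C_def] by (simp add: W_def)
  then show ?thesis
    using rat_eval_forward_map[of W "s*A/d" "B/(s*C)", unfolded WX Z u d] by simp
qed

lemma inverse_map_C_open:
  assumes "v \<in> C_open"
  shows "rat_eval inverse_map v \<in> D_open \<and> rat_eval forward_map (rat_eval inverse_map v) = v"
proof -
  obtain s u d where v: "v = [s,u,d]" "[s,u,d] \<in> C_open" using C_open_cases[OF assms] .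
  define A B C where "A = d - u*(1-s)" and "B = d + 1 - s" and "C = d + (1-s)*(1-u)"
  define p where "p = shape_point (d/A) (s*A/d) (B/(s*C))"
  have "d \<noteq> 0" "A \<noteq> 0" "s \<noteq> 1"
    using v(2) C_open_factors_nonzero[OF v(2)] by (auto simp: Cons_in_C_open_iff A_def)
  then have "p \<in> D_open"
    unfolding p_def using shape_point_in_D_open[OF shape_params_inverse[OF v(2)]]
    by (simp add: A_def B_def C_def)
  moreover have "rat_eval inverse_map v = p"
    unfolding v(1) p_def A_def B_def C_def by (rule rat_eval_inverse_map[OF v(2)])
  ultimately show ?thesis using forward_inverse[OF v(2)] v(1) by simp
qed

lemma shape_params_wz:
  assumes "shape_params w x y" "w*x \<noteq> 1"
  shows "w * (1/(w*x*y)) \<noteq> 1"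
proof
  assume "w * (1/(w*x*y)) = 1"
  then have xy: "x*y = 1" using assms(1) by (auto simp: shape_params_def field_simps)
  have "x * gluing_poly w x y = (1-w)*(1-x)*(1-w*x)"
    using xy unfolding gluing_poly_def by algebra
  then show False using assms by (auto simp: shape_params_def)
qed

definition cbar_poly_hom :: "complex \<Rightarrow> complex \<Rightarrow> complex \<Rightarrow> complex \<Rightarrow> complex" where
  "cbar_poly_hom s k u d = s * u * (s - 1) * (u - k) * k
     + d * (k^2 - s * k^2 - u * k + 4 * s * u * k - s^2 * u * k - s * u^2 + s^2 * u^2)
     + d^2 * (2 * k - s * k - u + 2 * s * u) + d^3"

lemma cbar_poly_hom: "cbar_poly s u d * k^3 = cbar_poly_hom s k (u*k) (d*k)"
  unfolding cbar_poly_def cbar_poly_hom_def by algebra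

lemma forward_point_C_open:
  fixes w x y :: complex
  defines "z \<equiv> 1/(w*x*y)"
  assumes "shape_params w x y" "w*x \<noteq> 1"
  shows "[w*x, (w-1)*(1-z)/(w*z-1), w*(1-z)*(1-w*x)/(w*z-1)] \<in> C_open"
proof -
  define K where "K = w*z - 1"
  have params: "w \<notin> {0, 1}" "x \<notin> {0, 1}" "y \<notin> {0, 1}" "w*x*y \<noteq> 1" "gluing_poly w x y = 0"
    using assms unfolding shape_params_def by auto
  have K: "K \<noteq> 0" using shape_params_wz[OF assms(2,3)] by (simp add: K_def z_def)
  have z: "z \<notin> {0, 1}" "z * (w*x*y) = 1" using params by (auto simp: z_def field_simps)
  have first: "w^2*x^2*(1-y)*(1-z) = (1-w)*(1-x)"
    using gluing_eq_poly_form[OF _ z(2)] params by simp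
  have "(1-w)*(1-x)*z - w*x*(w*x*z-1)*(1-z)
      = z*((1-w)*(1-x) - w^2*x^2*(1-y)*(1-z)) + (1-z)*w*x*(1 - z*(w*x*y))"
    by algebra
  then have "(1-w)*(1-x)*z - w*x*(w*x*z-1)*(1-z) = 0" using first z by simp
  moreover have "cbar_poly_hom (w*x) K ((w-1)*(1-z)) (w*(1-z)*(1-w*x))
      = ((1-w)*(1-x)*z - w*x*(w*x*z-1)*(1-z)) * (w*(1-z)*(1-w)*(1-w*x))"
    unfolding cbar_poly_hom_def K_def by algebra
  ultimately have "cbar_poly (w*x) ((w-1)*(1-z)/K) (w*(1-z)*(1-w*x)/K) * K^3 = 0"
    using cbar_poly_hom[of "w*x" _ _ K] K by simp
  moreover have "(w*(1-z)*(1-w*x)/K - w*x + 1) * K = (1-w*x)*(w-1)"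
    using K unfolding K_def by (simp add: field_simps)
  ultimately show ?thesis
    using K params z assms(3) unfolding K_def[symmetric]
    by (auto simp: Cons_in_C_open_iff)
qed

lemma forward_point_factors:
  fixes w x z u d :: complex
  assumes "u*(w*z-1) = (w-1)*(1-z)" and "d*(w*z-1) = w*(1-z)*(1-w*x)"
  shows "(d - u*(1-w*x))*(w*z-1) = (1-z)*(1-w*x)" "(d + 1 - w*x)*(w*z-1) = (1-w*x)*(w-1)"
    "(d + (1-w*x)*(1-u))*(w*z-1) = (1-w*x)*z*(w-1)"
  using assms by algebra+

lemma inverse_forward_point:
  fixes w x y :: complex
  defines "z \<equiv> 1/(w*x*y)"
  assumes "shape_params w x y" "w*x \<noteq> 1"
  shows "rat_eval inverse_map [w*x, (w-1)*(1-z)/(w*z-1), w*(1-z)*(1-w*x)/(w*z-1)]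
       = shape_point w x y"
proof -
  define u d where "u = (w-1)*(1-z)/(w*z-1)" and "d = w*(1-z)*(1-w*x)/(w*z-1)"
  have C: "[w*x, u, d] \<in> C_open"
    using forward_point_C_open[OF assms(2,3)] by (simp add: u_def d_def z_def)
  have params: "w \<notin> {0, 1}" "x \<notin> {0, 1}" "y \<notin> {0, 1}" "w*x*y \<noteq> 1"
    using assms unfolding shape_params_def by auto
  have K: "w*z - 1 \<noteq> 0" using shape_params_wz[OF assms(2,3)] by (simp add: z_def)
  have z: "z \<notin> {0, 1}" "z * (w*x*y) = 1" using params by (auto simp: z_def field_simps)
  have uK: "u*(w*z-1) = (w-1)*(1-z)" and dK: "d*(w*z-1) = w*(1-z)*(1-w*x)"
    using K by (simp_all add: u_def d_def)
  note factors = forward_point_factors[OF uK dK]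
  have "d/(d - u*(1-w*x)) = (d*(w*z-1))/((d - u*(1-w*x))*(w*z-1))" using K by simp
  also have "\<dots> = w" unfolding dK factors(1) using params z assms(3) by simp
  finally have W: "d/(d - u*(1-w*x)) = w" .
  have "w*x*(d - u*(1-w*x))/d = w*x*((d - u*(1-w*x))*(w*z-1))/(d*(w*z-1))" using K by simp
  also have "\<dots> = x" unfolding dK factors(1) using params z assms(3) by simp
  finally have X: "w*x*(d - u*(1-w*x))/d = x" .
  have "(d + 1 - w*x)/(w*x*(d + (1-w*x)*(1-u)))
      = ((d + 1 - w*x)*(w*z-1))/(w*x*((d + (1-w*x)*(1-u))*(w*z-1)))"
    using K by simp
  also have "\<dots> = 1/(w*x*z)" unfolding factors(2,3) using params assms(3) by simp
  also have "\<dots> = y" using z params by (simp add: field_simps)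
  finally have Y: "(d + 1 - w*x)/(w*x*(d + (1-w*x)*(1-u))) = y" .
  show ?thesis
    using rat_eval_inverse_map[OF C] unfolding W X Y by (simp add: u_def d_def)
qed

lemma forward_map_D_open:
  assumes "v \<in> D_open"
  shows "rat_eval forward_map v \<in> C_open \<and> rat_eval inverse_map (rat_eval forward_map v) = v"
proof -
  obtain w x y where "v = shape_point w x y" "shape_params w x y" "w*x \<noteq> 1"
    using D_open_cases[OF assms] .
  then show ?thesis
    using rat_eval_forward_map[of w x y] forward_point_C_open inverse_forward_point by simp
qed

lemma D_open_denominator:
  assumes "v \<in> D_open"
  shows "v!0 * v!9 \<noteq> 1"
proof -
  obtain w x y where "v = shape_point w x y" "shape_params w x y" "w*x \<noteq> 1"
    using D_open_cases[OF assms] .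
  then show ?thesis using shape_params_wz by (simp add: shape_point_def shape_triple_def)
qed

section \<open>Density of the open sets\<close>

lemma gluing_poly_wx_eq_1:
  assumes "w*x = 1" "gluing_poly w x y = 0"
  shows "y = w \<or> w*y = 1"
proof -
  have "w * gluing_poly w x y = (w*y - 1)*(y - w)"
    using assms(1) unfolding gluing_poly_def by algebra
  then show ?thesis using assms(2) by auto
qed

lemma gluing_poly_simple_root:
  assumes "shape_params w x y" "w*x = 1"
  shows "2 * (w^2*y*(y-1)) * x + (w - y) \<noteq> 0"
proof -
  have w: "w \<noteq> 0" "w \<noteq> 1" "x = 1/w" using assms by (auto simp: shape_params_def field_simps)
  have "y = w \<or> w*y = 1" using assms gluing_poly_wx_eq_1 by (auto simp: shape_params_def)
  then show ?thesis
  proof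
    assume "y = w"
    then have "2 * (w^2*y*(y-1)) * x + (w - y) = 2*w^2*(w-1)" using w by (simp add: power2_eq_square)
    then show ?thesis using w by simp
  next
    assume "w*y = 1"
    then have "w * (2 * (w^2*y*(y-1)) * x + (w - y)) = (w-1)^2"
      using w by (simp add: field_simps power2_eq_square) algebra
    then show ?thesis using w by auto
  qed
qed

lemma zariski_dense_D_open: "zariski_dense_in 12 deformation_variety D_open"
proof (rule zariski_dense_in_if_curves)
  show "D_open \<subseteq> deformation_variety" by (auto simp: D_open_def)
  fix p assume "p \<in> deformation_variety - D_open"
  then obtain w x0 y0 where p: "p = shape_point w x0 y0" "shape_params w x0 y0" "w*x0 = 1"
    using deformation_variety_shape_point unfolding D_open_def by blast
  define a b c where "a e = w^2*(y0+e)*((y0+e)-1)" and "b e = w - (y0+e)" and "c e = (y0+e)*(1-w)"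
    for e :: complex
  have abc: "gluing_poly w X (y0+e) = a e * X^2 + b e * X + c e" for X e
    unfolding gluing_poly_def a_def b_def c_def by (simp add: algebra_simps)
  have root: "a 0 * x0^2 + b 0 * x0 + c 0 = 0" and simple: "2 * a 0 * x0 + b 0 \<noteq> 0"
    using p(2) abc[of x0 0] gluing_poly_simple_root[OF p(2,3)]
    by (simp_all add: shape_params_def a_def b_def)
  have cont_abc: "isCont a 0" "isCont b 0" "isCont c 0"
    unfolding a_def[abs_def] b_def[abs_def] c_def[abs_def] by (intro continuous_intros)+
  obtain X where X: "isCont X 0" "X 0 = x0" "\<forall>\<^sub>F e in at 0. a e * (X e)^2 + b e * X e + c e = 0"
    using continuous_quadratic_root[OF cont_abc root simple] by blast
  have params: "w \<notin> {0, 1}" "x0 \<notin> {0, 1}" "y0 \<notin> {0, 1}" "w*x0*y0 \<noteq> 1"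
    using p(2) by (auto simp: shape_params_def)
  show "\<exists>\<gamma>. \<gamma> 0 = p \<and> (\<forall>i<12. isCont (\<lambda>e::complex. \<gamma> e ! i) 0) \<and> (\<forall>\<^sub>F e in at 0. \<gamma> e \<in> D_open)"
  proof (intro exI[of _ "\<lambda>e. shape_point w (X e) (y0 + e)"] conjI)
    show "shape_point w (X 0) (y0 + 0) = p" using p X by simp
    show "\<forall>i<12. isCont (\<lambda>e. shape_point w (X e) (y0 + e) ! i) 0"
      by (rule isCont_shape_point) (use X params in \<open>auto intro!: continuous_intros\<close>)
    have cont: "isCont (\<lambda>e. w * X e * (y0 + e)) 0" using X(1) by (intro continuous_intros)
    have "\<forall>\<^sub>F e in at 0. X e \<noteq> 0" "\<forall>\<^sub>F e in at 0. X e \<noteq> 1"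
      using X(1,2) params by (auto intro!: tendsto_imp_eventually_ne isContD)
    moreover have "\<forall>\<^sub>F e in at 0. w * X e * (y0 + e) \<noteq> 1"
      using cont X(2) params by (auto intro!: tendsto_imp_eventually_ne isContD)
    moreover have "\<forall>\<^sub>F e in at 0. e \<notin> {-y0, 1 - y0, w - y0, 1/w - y0}"
      by (simp add: eventually_conj_iff eventually_neq_at_within)
    ultimately show "\<forall>\<^sub>F e in at 0. shape_point w (X e) (y0 + e) \<in> D_open"
      using X(3)
    proof eventually_elim
      case (elim e)
      then have "gluing_poly w (X e) (y0 + e) = 0" using abc by simp
      moreover have "y0 + e \<notin> {0, 1}" "y0 + e \<noteq> w" "w * (y0 + e) \<noteq> 1"
        using elim(4) params by (auto simp: field_simps eq_neg_iff_add_eq_0)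
      ultimately have "shape_params w (X e) (y0 + e)" "w * X e \<noteq> 1"
        using elim(1-3) params gluing_poly_wx_eq_1 by (auto simp: shape_params_def)
      then show ?case by (rule shape_point_in_D_open)
    qed
  qed
qed

lemma cbar_poly_quadratic_in_u:
  "cbar_poly s u d = s*(s-1)*(1+d) * u^2 + (-(s*(s-1)) + d*(4* s-1-s^2) + d^2*(2* s-1)) * u
     + (d*(1-s) + d^2*(2-s) + d^3)"
  unfolding cbar_poly_def by algebra

lemma cbar_poly_simple_root:
  assumes "[s,u,d] \<in> C_bar - C_open" "\<not> (s = 1 \<and> d = 0)"
  shows "2 * (s*(s-1)*(1+d)) * u + (-(s*(s-1)) + d*(4* s-1-s^2) + d^2*(2* s-1)) \<noteq> 0"
proof -
  have C: "s \<noteq> 0" "u \<noteq> 0" "cbar_poly s u d = 0" and "s = 1 \<or> d = 0 \<or> d = s - 1"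
    using assms(1) by (auto simp: Cons_in_C_bar_iff Cons_in_C_open_iff)
  with assms(2) consider "s = 1" "d \<noteq> 0" | "s \<noteq> 1" "d = 0" | "s \<noteq> 1" "d = s - 1" by blast
  then show ?thesis
  proof cases
    case 1
    have "cbar_poly 1 u d = d*(d^2 + (1+u)*d + 2*u)"
      unfolding cbar_poly_def by (simp add: algebra_simps power2_eq_square power3_eq_cube)
    then have "d^2 + (1+u)*d + 2*u = 0" using 1 C(3) by simp
    then have "d \<noteq> -2" by (auto simp: power2_eq_square)
    then have "d * (d + 2) \<noteq> 0" using 1 by (simp add: eq_neg_iff_add_eq_0)
    moreover have "2 * (1 * (1-1) * (1+d)) * u + (-(1 * (1-1)) + d * (4 * 1 - 1 - 1^2) + d^2 * (2 * 1 - 1))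
        = d * (d + 2)"
      by (simp add: algebra_simps power2_eq_square)
    ultimately show ?thesis using 1 by simp
  next
    case 2
    have "cbar_poly s u 0 = s*u*(s-1)*(u-1)" unfolding cbar_poly_def by simp
    then have "u = 1" using 2 C by simp
    then show ?thesis using 2 C by simp
  next
    case 3
    have "cbar_poly s u (s-1) = s^2*u*(1+u)*(s-1)" unfolding cbar_poly_def by algebra
    then have "u = -1" using 3 C by (simp add: add_eq_0_iff)
    moreover have "2 * (s*(s-1)*(1+(s-1))) * (-1) + (-(s*(s-1)) + (s-1)*(4* s-1-s^2)
        + (s-1)^2*(2* s-1)) = -(s^2*(s-1))"
      by algebra
    ultimately show ?thesis using 3 C by simp
  qed
qed

lemma C_open_curve:
  fixes s d a b c :: "complex \<Rightarrow> complex"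
  assumes cont: "isCont s 0" "isCont d 0" "isCont a 0" "isCont b 0" "isCont c 0"
    and root: "a 0 * u0^2 + b 0 * u0 + c 0 = 0" and simple: "2 * a 0 * u0 + b 0 \<noteq> 0"
    and "u0 \<noteq> 0" and p: "p = [s 0, u0, d 0]"
    and quadratic: "\<And>e u. a e * u^2 + b e * u + c e = 0 \<Longrightarrow> cbar_poly (s e) u (d e) = 0"
    and generic: "\<forall>\<^sub>F e in at 0. s e \<notin> {0, 1} \<and> d e \<noteq> 0 \<and> d e \<noteq> s e - 1"
  shows "\<exists>\<gamma>. \<gamma> 0 = p \<and> (\<forall>i<3. isCont (\<lambda>e::complex. \<gamma> e ! i) 0) \<and> (\<forall>\<^sub>F e in at 0. \<gamma> e \<in> C_open)"
proof -
  obtain U where U: "isCont U 0" "U 0 = u0" "\<forall>\<^sub>F e in at 0. a e * (U e)^2 + b e * U e + c e = 0"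
    using continuous_quadratic_root[OF cont(3-5) root simple] by blast
  have "\<forall>\<^sub>F e in at 0. U e \<noteq> 0"
    using U(1,2) \<open>u0 \<noteq> 0\<close> by (auto intro!: tendsto_imp_eventually_ne isContD)
  show ?thesis
  proof (intro exI[of _ "\<lambda>e. [s e, U e, d e]"] conjI)
    show "[s 0, U 0, d 0] = p" using U(2) p by simp
    show "\<forall>i<3. isCont (\<lambda>e. [s e, U e, d e] ! i) 0" using cont U(1) by (simp add: all_less_3)
    show "\<forall>\<^sub>F e in at 0. [s e, U e, d e] \<in> C_open"
      using U(3) generic \<open>\<forall>\<^sub>F e in at 0. U e \<noteq> 0\<close>
      by eventually_elim (auto simp: Cons_in_C_open_iff quadratic)
  qed
qed

lemma zariski_dense_C_open: "zariski_dense_in 3 C_bar C_open"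
proof (rule zariski_dense_in_if_curves)
  show "C_open \<subseteq> C_bar" by (auto simp: C_open_def)
  fix p assume p: "p \<in> C_bar - C_open"
  have "length p = 3" using p by (simp add: C_bar_def)
  then obtain s0 u0 d0 where p_eq: "p = [s0, u0, d0]"
    by (simp add: list_eq_iff_nth_eq all_less_3)
  have base: "s0 \<noteq> 0" "u0 \<noteq> 0" "cbar_poly s0 u0 d0 = 0"
    using p unfolding p_eq by (auto simp: Cons_in_C_bar_iff)
  show "\<exists>\<gamma>. \<gamma> 0 = p \<and> (\<forall>i<3. isCont (\<lambda>e::complex. \<gamma> e ! i) 0) \<and> (\<forall>\<^sub>F e in at 0. \<gamma> e \<in> C_open)"
  proof (cases "s0 = 1 \<and> d0 = 0")
    case False
    define a b c where "a e = (s0+e)*((s0+e)-1)*(1+(d0+2*e))"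
      and "b e = -((s0+e)*((s0+e)-1)) + (d0+2*e)*(4*(s0+e)-1-(s0+e)^2) + (d0+2*e)^2*(2*(s0+e)-1)"
      and "c e = (d0+2*e)*(1-(s0+e)) + (d0+2*e)^2*(2-(s0+e)) + (d0+2*e)^3" for e :: complex
    have "\<forall>\<^sub>F e in at 0. e \<notin> {-s0, 1 - s0, -d0/2, s0 - 1 - d0}"
      by (simp add: eventually_conj_iff eventually_neq_at_within)
    then have "\<forall>\<^sub>F e in at 0. s0 + e \<notin> {0, 1} \<and> d0 + 2*e \<noteq> 0 \<and> d0 + 2*e \<noteq> (s0 + e) - 1"
      by (rule eventually_mono) (auto simp: field_simps eq_neg_iff_add_eq_0)
    moreover have "isCont a 0" "isCont b 0" "isCont c 0"
      unfolding a_def[abs_def] b_def[abs_def] c_def[abs_def] by (intro continuous_intros)+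
    moreover have "a 0 * u0^2 + b 0 * u0 + c 0 = 0" "2 * a 0 * u0 + b 0 \<noteq> 0"
      using base cbar_poly_quadratic_in_u[of s0 u0 d0] cbar_poly_simple_root[of s0 u0 d0] p False
      unfolding p_eq by (simp_all add: a_def b_def c_def)
    ultimately show ?thesis
      using C_open_curve[of "\<lambda>e. s0 + e" "\<lambda>e. d0 + 2*e" a b c u0 p] base(2) p_eq
      by (simp add: cbar_poly_quadratic_in_u a_def b_def c_def)
  next
    case True
    \<comment> \<open>Along d = e (e + k) the polynomial is divisible by e = s - 1; the choice of k makes
      u0 a simple root of the quotient at e = 0.\<close>
    define k where "k = (1 - u0)/2"
    define a b c where "a e = (1+e)*(1+e*(e+k))"
      and "b e = -(1+e) + (k+e)*(2+2*e-e^2) + e*(e+k)^2*(2*(1+e)-1)"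
      and "c e = -(e*(e+k)) + e*(e+k)^2*(1-e) + e^2*(k+e)^3" for e :: complex
    have "\<forall>\<^sub>F e in at 0. e \<notin> {-1, 0, -k, 1 - k}"
      by (simp add: eventually_conj_iff eventually_neq_at_within)
    then have "\<forall>\<^sub>F e in at 0. 1 + e \<notin> {0, 1} \<and> e*(e+k) \<noteq> 0 \<and> e*(e+k) \<noteq> (1 + e) - 1"
      by (rule eventually_mono) (auto simp: eq_neg_iff_add_eq_0 eq_diff_eq add.commute)
    moreover have "cbar_poly (1+e) u (e*(e+k)) = e * (a e * u^2 + b e * u + c e)" for e u
      unfolding cbar_poly_def a_def b_def c_def by algebra
    moreover have "isCont a 0" "isCont b 0" "isCont c 0"
      unfolding a_def[abs_def] b_def[abs_def] c_def[abs_def] by (intro continuous_intros)+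
    moreover have "a 0 * u0^2 + b 0 * u0 + c 0 = 0" "2 * a 0 * u0 + b 0 \<noteq> 0"
      using base(2) by (simp_all add: a_def b_def c_def k_def power2_eq_square field_simps)
    ultimately show ?thesis
      using C_open_curve[of "\<lambda>e. 1 + e" "\<lambda>e. e*(e+k)" a b c u0 p] base(2) p_eq True
      by simp
  qed
qed

theorem mainTheorem2:
  shows "birational_iso 12 deformation_variety 3 C_bar"
  unfolding birational_iso_def
proof (intro exI conjI)
  show "rat_map 12 3 forward_map" "rat_map 3 12 inverse_map"
    by (fact rat_map_forward_map rat_map_inverse_map)+
  show "zariski_open_in 12 deformation_variety D_open" "zariski_dense_in 12 deformation_variety D_open"
    by (fact zariski_open_D_open zariski_dense_D_open)+
  show "zariski_open_in 3 C_bar C_open" "zariski_dense_in 3 C_bar C_open"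
    by (fact zariski_open_C_open zariski_dense_C_open)+
  show "defined_on forward_map D_open"
    using D_open_denominator by (blast intro: defined_on_forward_map)
  show "defined_on inverse_map C_open" by (fact defined_on_inverse_map)
  show "\<forall>v\<in>D_open. rat_eval forward_map v \<in> C_open \<and> rat_eval inverse_map (rat_eval forward_map v) = v"
    using forward_map_D_open by blast
  show "\<forall>v\<in>C_open. rat_eval inverse_map v \<in> D_open \<and> rat_eval forward_map (rat_eval inverse_map v) = v"
    using inverse_map_C_open by blast
qed

end
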